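(* Let $X$ be a nontrivial real Banach space. The following assertions are equivalent: (i) $X^*$ has the weak$^*$ diameter $2$ property; (ii) $X$ is weakly octahedral; (iii) for every finite-dimensional subspace $E$ of $X$, every $x^*\in B_{X^*}$, every $\varepsilon>0$, and every $\varepsilon_0\in(0,\varepsilon)$, there is a $y\in S_X$ such that, whenever $|\gamma|\leq 1+\varepsilon_0$, there is a $y^*\in X^*$ satisfying $y^*|_E=x^*|_E$, $y^*(y)=\gamma$, and $\|y^*\|\leq 1+\varepsilon$; (iii') for every finite-dimensional subspace $E$ of $X$, every $x^*\in B_{X^*}$, and every $\varepsilon>0$, there are $y\in S_X$ and $x_1^*,x_2^*\in X^*$ satisfying $x_1^*|_E=x_2^*|_E=x^*|_E$, $x_1^*(y)-x_2^*(y)>2-\varepsilon$, and $\|x_1^*\|,\|x_2^*\|\leq 1+\varepsilon$.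
   Context: $B_Z$, $S_Z$ denote the closed unit ball and unit sphere of a Banach space $Z$. $X^*$ has the weak$^*$ diameter $2$ property if every nonempty relatively weak$^*$ open subset of $B_{X^*}$ has diameter $2$. $X$ is weakly octahedral if for every finite-dimensional subspace $E$ of $X$, every $x^*\in B_{X^*}$, and every $\varepsilon>0$, there is a $y\in S_X$ such that $\|x+y\|\geq(1-\varepsilon)(|x^*(x)|+\|y\|)$ for all $x\in E$. *)

theory Defs
  imports "HOL-Analysis.Analysis"
begin

text \<open>The dual space X* is modelled as the type of bounded linear functionals
  from X to the reals (blinfun), with the operator norm.\<close>

definition weak_star_open :: "('a::real_normed_vector \<Rightarrow>\<^sub>L real) set \<Rightarrow> bool" where
  "weak_star_open U \<longleftrightarrow>
     (\<forall>f\<in>U. \<exists>F e. finite F \<and> e > 0 \<and>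
        {g. \<forall>x\<in>F. \<bar>blinfun_apply g x - blinfun_apply f x\<bar> < e} \<subseteq> U)"

definition weak_star_diameter_two :: "'a::real_normed_vector itself \<Rightarrow> bool" where
  "weak_star_diameter_two _ \<longleftrightarrow>
     (\<forall>U::('a \<Rightarrow>\<^sub>L real) set. weak_star_open U \<longrightarrow>
        U \<inter> {f. norm f \<le> 1} \<noteq> {} \<longrightarrow> diameter (U \<inter> {f. norm f \<le> 1}) = 2)"

definition finite_dim_subspace :: "'a::real_vector set \<Rightarrow> bool" where
  "finite_dim_subspace E \<longleftrightarrow> subspace E \<and> (\<exists>F. finite F \<and> span F = E)"

definition weakly_octahedral :: "'a::real_normed_vector itself \<Rightarrow> bool" where
  "weakly_octahedral _ \<longleftrightarrow>
     (\<forall>(E::'a set) (xs::'a \<Rightarrow>\<^sub>L real) (e::real).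
        finite_dim_subspace E \<longrightarrow> norm xs \<le> 1 \<longrightarrow> e > 0 \<longrightarrow>
        (\<exists>y. norm y = 1 \<and>
           (\<forall>x\<in>E. norm (x + y) \<ge> (1 - e) * (\<bar>blinfun_apply xs x\<bar> + norm y))))"

end

theory Submission
  imports Defs
begin

text \<open>(iii) gives (iii') by taking \<open>\<gamma> = \<plusminus>1\<close>, and (iii') gives (ii) by testing \<open>x + y\<close> against
  whichever of the two almost antipodal extensions matches the sign of \<open>x\<^sup>*(x)\<close>. Conversely,
  weak octahedrality says precisely that \<open>x + t y \<mapsto> x\<^sup>*(x) + t \<gamma>\<close> has norm at most \<open>1 + \<epsilon>\<close> on
  \<open>span (E \<union> {y})\<close>, so Hahn--Banach yields (iii). Finally (i) and (iii') are linked through the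
  weak* topology: a basic weak* neighbourhood is determined by finitely many points, whose
  span plays the role of \<open>E\<close>. Rescaled extensions of \<open>x\<^sup>*|\<^sub>E\<close> lie in the neighbourhood and
  are almost \<open>2\<close> apart; conversely, two far apart functionals of a small neighbourhood become
  extensions of \<open>x\<^sup>*|\<^sub>E\<close> after a correction of small norm, because on a finite-dimensional
  subspace weak* closeness controls the norm. Hahn--Banach itself is proved from Zorn's lemma,
  for subspaces of \<open>X \<times> \<real>\<close> whose second coordinate is dominated by \<open>C \<parallel>x\<parallel>\<close>; such a subspace
  is automatically the graph of a linear functional.\<close>

section \<open>Hahn--Banach for dominated graphs\<close>

definition dominated_graph :: "real \<Rightarrow> ('a::real_normed_vector \<times> real) set \<Rightarrow> bool" where
  "dominated_graph C G \<longleftrightarrow> subspace G \<and> (\<forall>(x, a)\<in>G. a \<le> C * norm x)"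

lemma dominated_graph_unique:
  assumes G: "dominated_graph C G" and "(x, a) \<in> G" "(x, b) \<in> G"
  shows "a = b"
proof -
  have "(0, a - b) \<in> G" "(0, b - a) \<in> G"
    using assms subspace_diff[of G "(x, a)" "(x, b)"] subspace_diff[of G "(x, b)" "(x, a)"]
    by (auto simp: dominated_graph_def)
  then have "a - b \<le> 0" "b - a \<le> 0" using G unfolding dominated_graph_def by auto
  then show ?thesis by simp
qed

lemma dominated_graph_Union_chain:
  assumes "Ch \<noteq> {}" and dom: "\<And>G. G \<in> Ch \<Longrightarrow> dominated_graph C G"
    and chain: "\<And>G H. G \<in> Ch \<Longrightarrow> H \<in> Ch \<Longrightarrow> G \<subseteq> H \<or> H \<subseteq> G"
  shows "dominated_graph C (\<Union>Ch)"
proof -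
  have "subspace (\<Union>Ch)"
    unfolding subspace_def
  proof (intro conjI ballI allI)
    show "0 \<in> \<Union>Ch" using assms(1) dom unfolding dominated_graph_def subspace_def by blast
  next
    fix p q assume "p \<in> \<Union>Ch" "q \<in> \<Union>Ch"
    then obtain G H where GH: "G \<in> Ch" "H \<in> Ch" "p \<in> G" "q \<in> H" by blast
    then have "G \<subseteq> H \<or> H \<subseteq> G" using chain by blast
    with GH dom show "p + q \<in> \<Union>Ch" unfolding dominated_graph_def subspace_def by blast
  next
    fix c p assume "p \<in> \<Union>Ch"
    with dom show "c *\<^sub>R p \<in> \<Union>Ch" unfolding dominated_graph_def subspace_def by blast
  qed
  with dom show ?thesis unfolding dominated_graph_def by blast
qed

lemma dominated_graph_maximal:
  assumes "dominated_graph C G0"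
  obtains M where "G0 \<subseteq> M" "dominated_graph C M"
    "\<And>G. dominated_graph C G \<Longrightarrow> M \<subseteq> G \<Longrightarrow> G = M"
proof -
  define A where "A = {G. dominated_graph C G \<and> G0 \<subseteq> G}"
  have "\<forall>Ch\<in>chains A. \<exists>U\<in>A. \<forall>G\<in>Ch. G \<subseteq> U"
  proof
    fix Ch assume Ch: "Ch \<in> chains A"
    show "\<exists>U\<in>A. \<forall>G\<in>Ch. G \<subseteq> U"
    proof (cases "Ch = {}")
      case True with assms show ?thesis unfolding A_def by blast
    next
      case False
      have "dominated_graph C (\<Union>Ch)"
        using False chainsD[OF Ch] chainsD2[OF Ch] unfolding A_def
        by (intro dominated_graph_Union_chain) blast+
      moreover have "G0 \<subseteq> \<Union>Ch" using False chainsD2[OF Ch] unfolding A_def by blast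
      ultimately show ?thesis unfolding A_def by blast
    qed
  qed
  then obtain M where "M \<in> A" and max: "\<forall>G\<in>A. M \<subseteq> G \<longrightarrow> G = M"
    by (blast dest: Zorn_Lemma2)
  then have "G0 \<subseteq> M" "dominated_graph C M" unfolding A_def by auto
  moreover have "G = M" if "dominated_graph C G" "M \<subseteq> G" for G
    using max that \<open>G0 \<subseteq> M\<close> unfolding A_def by blast
  ultimately show ?thesis by (rule that)
qed

text \<open>The one-dimensional step of Hahn--Banach; the two families of bounds on \<open>c\<close> are compatible
  by the triangle inequality.\<close>
lemma dominated_graph_extend_value:
  assumes M: "dominated_graph C M" and C: "C \<ge> 0"
  obtains c where "\<And>m a. (m, a) \<in> M \<Longrightarrow> a - C * norm (m - y) \<le> c"
    "\<And>m b. (m, b) \<in> M \<Longrightarrow> c \<le> C * norm (m + y) - b"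
proof -
  define S where "S = {a - C * norm (m - y) | m a. (m, a) \<in> M}"
  have M0: "(0, 0) \<in> M" using M subspace_0 by (fastforce simp: dominated_graph_def zero_prod_def)
  have S_le: "s \<le> C * norm (m' + y) - b" if "s \<in> S" "(m', b) \<in> M" for s m' b
  proof -
    obtain m a where ma: "s = a - C * norm (m - y)" "(m, a) \<in> M"
      using \<open>s \<in> S\<close> unfolding S_def by blast
    have "(m + m', a + b) \<in> M"
      using M ma(2) that(2) subspace_add[of M "(m, a)" "(m', b)"] by (simp add: dominated_graph_def)
    then have "a + b \<le> C * norm (m + m')" using M unfolding dominated_graph_def by blast
    also have "\<dots> \<le> C * (norm (m - y) + norm (m' + y))"
      using C norm_triangle_ineq[of "m - y" "m' + y"] by (intro mult_left_mono) simp_all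
    finally show ?thesis using ma by (simp add: algebra_simps)
  qed
  have "bdd_above S" using S_le[OF _ M0] by (rule bdd_aboveI)
  moreover have "S \<noteq> {}" using M0 unfolding S_def by blast
  ultimately show ?thesis
    using S_le by (intro that[of "Sup S"] cSup_upper cSup_least) (auto simp: S_def)
qed

lemma dominated_graph_extend_bound:
  assumes M: "dominated_graph C M" and mb: "(m, b) \<in> M"
    and lower: "\<And>m a. (m, a) \<in> M \<Longrightarrow> a - C * norm (m - y) \<le> c"
    and upper: "\<And>m b. (m, b) \<in> M \<Longrightarrow> c \<le> C * norm (m + y) - b"
  shows "b + k * c \<le> C * norm (m + k *\<^sub>R y)"
proof -
  have Mscale: "(r *\<^sub>R m, r * b) \<in> M" for r
    using M mb subspace_scale[of M "(m, b)" r] by (simp add: dominated_graph_def)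
  have rescale: "s * norm ((1 / s) *\<^sub>R m + v) = norm (m + s *\<^sub>R v)" if "s > 0" for s v
  proof -
    have "s *\<^sub>R ((1 / s) *\<^sub>R m + v) = m + s *\<^sub>R v" using that by (simp add: scaleR_add_right)
    then show ?thesis using that by (metis abs_of_pos norm_scaleR)
  qed
  show ?thesis
  proof (cases k "0::real" rule: linorder_cases)
    case less
    define s where "s = - k"
    have s: "s > 0" using less by (simp add: s_def)
    have "s * ((1 / s) * b - C * norm ((1 / s) *\<^sub>R m + - y)) \<le> s * c"
      using lower[OF Mscale[of "1 / s"]] s by (intro mult_left_mono) auto
    also have "s * ((1 / s) * b - C * norm ((1 / s) *\<^sub>R m + - y))
        = b - C * (s * norm ((1 / s) *\<^sub>R m + - y))"
      using s by (simp add: right_diff_distrib)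
    also have "s * norm ((1 / s) *\<^sub>R m + - y) = norm (m + k *\<^sub>R y)"
      unfolding rescale[OF s] by (simp add: s_def)
    finally show ?thesis by (simp add: s_def)
  next
    case equal with M mb show ?thesis by (auto simp: dominated_graph_def)
  next
    case greater
    have "k * c \<le> k * (C * norm ((1 / k) *\<^sub>R m + y) - (1 / k) * b)"
      using upper[OF Mscale[of "1 / k"]] greater by (intro mult_left_mono) auto
    also have "\<dots> = C * (k * norm ((1 / k) *\<^sub>R m + y)) - b"
      using greater by (simp add: right_diff_distrib)
    finally show ?thesis unfolding rescale[OF greater] by simp
  qed
qed

lemma dominated_graph_extend:
  assumes M: "dominated_graph C M" and C: "C \<ge> 0"
  shows "\<exists>c. dominated_graph C (span (insert (y, c) M))"
proof -
  obtain c where lower: "\<And>m a. (m, a) \<in> M \<Longrightarrow> a - C * norm (m - y) \<le> c"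
    and upper: "\<And>m b. (m, b) \<in> M \<Longrightarrow> c \<le> C * norm (m + y) - b"
    using dominated_graph_extend_value[OF M C] by blast
  have "a \<le> C * norm x" if xa: "(x, a) \<in> span (insert (y, c) M)" for x a
  proof -
    have "span M = M" using M unfolding dominated_graph_def by (simp add: span_eq_iff)
    moreover obtain k where "(x, a) - k *\<^sub>R (y, c) \<in> span M"
      using xa unfolding span_insert by blast
    ultimately have "(x, a) - k *\<^sub>R (y, c) \<in> M" by metis
    then have "(x - k *\<^sub>R y, a - k * c) \<in> M" by simp
    from dominated_graph_extend_bound[OF M this lower upper, of k] show ?thesis by simp
  qed
  then show ?thesis unfolding dominated_graph_def using subspace_span by blast
qed

theorem hahn_banach_dominated_graph:
  fixes G0 :: "('a::real_normed_vector \<times> real) set"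
  assumes G0: "dominated_graph C G0" and C: "C \<ge> 0"
  shows "\<exists>f::'a \<Rightarrow>\<^sub>L real. (\<forall>(x, a)\<in>G0. blinfun_apply f x = a) \<and> norm f \<le> C"
proof -
  obtain M where G0M: "G0 \<subseteq> M" and M: "dominated_graph C M"
    and Mmax: "\<And>G. dominated_graph C G \<Longrightarrow> M \<subseteq> G \<Longrightarrow> G = M"
    using dominated_graph_maximal[OF G0] by blast
  have Msub: "subspace M" and Mdom: "\<And>x a. (x, a) \<in> M \<Longrightarrow> a \<le> C * norm x"
    using M unfolding dominated_graph_def by auto
  have "\<exists>a. (y, a) \<in> M" for y
  proof -
    obtain c where "dominated_graph C (span (insert (y, c) M))"
      using dominated_graph_extend[OF M C] by blast
    moreover have "M \<subseteq> span (insert (y, c) M)" using span_superset by blast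
    ultimately have "span (insert (y, c) M) = M" by (rule Mmax)
    then show ?thesis using span_superset[of "insert (y, c) M"] by blast
  qed
  then obtain f where fM: "\<And>x. (x, f x) \<in> M" by metis
  have uniq: "a = f x" if "(x, a) \<in> M" for x a
    using dominated_graph_unique[OF M that fM] .
  have add: "f (x + y) = f x + f y" for x y
    using subspace_add[OF Msub fM fM, of x y] by (intro uniq[symmetric]) simp
  have scale: "f (r *\<^sub>R x) = r * f x" for r x
    using subspace_scale[OF Msub fM, of r x] by (intro uniq[symmetric]) simp
  have bound: "\<bar>f x\<bar> \<le> C * norm x" for x
    using Mdom[OF fM, of x] Mdom[OF fM, of "- x"] scale[of "- 1" x] by (simp add: abs_le_iff)
  have "bounded_linear f"
    by (rule bounded_linear_intro[of f C]) (use add scale bound in \<open>auto simp: mult.commute\<close>)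
  then have Bf: "blinfun_apply (Blinfun f) = f" by (rule bounded_linear_Blinfun_apply)
  have "norm (Blinfun f) \<le> C"
    using bound C by (intro norm_blinfun_bound) (simp_all add: Bf)
  moreover have "\<forall>(x, a)\<in>G0. blinfun_apply (Blinfun f) x = a"
    unfolding Bf using G0M by (auto intro: uniq[symmetric])
  ultimately show ?thesis by blast
qed

lemma blinfun_extension_with_value:
  fixes h :: "'a::real_normed_vector \<Rightarrow>\<^sub>L real"
  assumes E: "subspace E" and C: "C \<ge> 0"
    and bound: "\<And>v. v \<in> E \<Longrightarrow> \<bar>blinfun_apply h v\<bar> \<le> C * norm v"
    and bound_value: "\<And>v. v \<in> E \<Longrightarrow> \<bar>blinfun_apply h v + \<gamma>\<bar> \<le> C * norm (v + y)"
  shows "\<exists>f::'a \<Rightarrow>\<^sub>L real. (\<forall>x\<in>E. blinfun_apply f x = blinfun_apply h x)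
    \<and> blinfun_apply f y = \<gamma> \<and> norm f \<le> C"
proof -
  define graph where "graph = (\<lambda>x. (x, blinfun_apply h x)) ` E"
  define G where "G = span (insert (y, \<gamma>) graph)"
  have "linear (\<lambda>x. (x, blinfun_apply h x))"
    by (intro bounded_linear.linear bounded_linear_Pair bounded_linear_ident
        blinfun.bounded_linear_right)
  then have "subspace graph" unfolding graph_def using E by (rule linear_subspace_image)
  have "a \<le> C * norm z" if za: "(z, a) \<in> G" for z a
  proof -
    have "span graph = graph" using \<open>subspace graph\<close> by (rule span_eq_iff[THEN iffD2])
    moreover obtain k where "(z, a) - k *\<^sub>R (y, \<gamma>) \<in> span graph"
      using za unfolding G_def span_insert by blast
    moreover have "(z, a) - k *\<^sub>R (y, \<gamma>) = (z - k *\<^sub>R y, a - k * \<gamma>)" by simp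
    ultimately have "(z - k *\<^sub>R y, a - k * \<gamma>) \<in> graph" by metis
    then have "z - k *\<^sub>R y \<in> E" "a - k * \<gamma> = blinfun_apply h (z - k *\<^sub>R y)"
      unfolding graph_def by auto
    then obtain u where u: "u \<in> E" "z = u + k *\<^sub>R y" "a = blinfun_apply h u + k * \<gamma>"
      by (intro that[of "z - k *\<^sub>R y"]) auto
    show ?thesis
    proof (cases "k = 0")
      case True
      then show ?thesis using bound[OF u(1)] u by simp
    next
      case False
      define v where "v = (1 / k) *\<^sub>R u"
      have v: "v \<in> E" unfolding v_def using E u(1) by (rule subspace_scale)
      have "u = k *\<^sub>R v" using False unfolding v_def by simp
      then have "a = k * (blinfun_apply h v + \<gamma>)" "z = k *\<^sub>R (v + y)"
        using u by (simp_all add: blinfun.scaleR_right algebra_simps)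
      then have "a \<le> \<bar>k\<bar> * \<bar>blinfun_apply h v + \<gamma>\<bar>" "norm z = \<bar>k\<bar> * norm (v + y)"
        by (simp_all add: abs_mult[symmetric])
      then show ?thesis using bound_value[OF v] mult_left_mono[of _ _ "\<bar>k\<bar>"]
        by (smt (verit) abs_ge_zero mult.left_commute)
    qed
  qed
  then have "dominated_graph C G" unfolding dominated_graph_def G_def using subspace_span by blast
  then obtain f :: "'a \<Rightarrow>\<^sub>L real" where f: "\<forall>(x, a)\<in>G. blinfun_apply f x = a" "norm f \<le> C"
    using hahn_banach_dominated_graph C by blast
  have "graph \<subseteq> G" "(y, \<gamma>) \<in> G" unfolding G_def using span_superset by blast+
  with f show ?thesis unfolding graph_def by (intro exI[of _ f]) auto
qed

lemma blinfun_extension: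
  fixes h :: "'a::real_normed_vector \<Rightarrow>\<^sub>L real"
  assumes "subspace E" "C \<ge> 0" "\<And>v. v \<in> E \<Longrightarrow> \<bar>blinfun_apply h v\<bar> \<le> C * norm v"
  shows "\<exists>f::'a \<Rightarrow>\<^sub>L real. (\<forall>x\<in>E. blinfun_apply f x = blinfun_apply h x) \<and> norm f \<le> C"
  using blinfun_extension_with_value[of E C h 0 0] assms by auto

section \<open>Weak* control on finite-dimensional subspaces\<close>

lemma abs_blinfun_le:
  fixes f :: "'a::real_normed_vector \<Rightarrow>\<^sub>L real"
  assumes "norm f \<le> c"
  shows "\<bar>blinfun_apply f x\<bar> \<le> c * norm x"
  using norm_blinfun[of f x] mult_right_mono[OF assms norm_ge_zero[of x]] by simp

lemma exists_unit_blinfun_gt: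
  fixes h :: "'a::real_normed_vector \<Rightarrow>\<^sub>L real"
  assumes r: "r \<ge> 0" and hr: "norm h > r"
  obtains y where "norm y = 1" "blinfun_apply h y > r"
proof -
  have "\<bar>blinfun_apply h x\<bar> \<le> r * norm x" if small: "\<And>y. norm y = 1 \<Longrightarrow> blinfun_apply h y \<le> r" for x
  proof (cases "x = 0")
    case False
    define y where "y = (1 / norm x) *\<^sub>R x"
    have "norm y = 1" "norm (- y) = 1" "x = norm x *\<^sub>R y" using False by (simp_all add: y_def)
    then have "\<bar>blinfun_apply h y\<bar> \<le> r" "blinfun_apply h x = norm x * blinfun_apply h y"
      using small[of y] small[of "- y"] blinfun.scaleR_right[of h "norm x" y]
      by (auto simp: blinfun.minus_right abs_le_iff)
    then show ?thesis by (metis abs_mult abs_norm_cancel mult.commute mult_right_mono norm_ge_zero)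
  qed simp
  then show ?thesis using that norm_blinfun_bound[OF r, of h] hr by force
qed

lemma abs_scaleR_infdist_le_norm:
  fixes V :: "'a::real_normed_vector set"
  assumes "subspace V" "v \<in> V"
  shows "\<bar>t\<bar> * infdist a V \<le> norm (v + t *\<^sub>R a)"
proof (cases "t = 0")
  case False
  have "- ((1 / t) *\<^sub>R v) \<in> V" using assms by (simp add: subspace_neg subspace_scale)
  then have "infdist a V \<le> norm ((1 / t) *\<^sub>R v + a)"
    using infdist_le[of "- ((1 / t) *\<^sub>R v)" V a] by (simp add: dist_norm add.commute)
  then have "\<bar>t\<bar> * infdist a V \<le> norm (t *\<^sub>R ((1 / t) *\<^sub>R v + a))"
    by (simp add: mult_left_mono)
  also have "t *\<^sub>R ((1 / t) *\<^sub>R v + a) = v + t *\<^sub>R a" using False by (simp add: algebra_simps)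
  finally show ?thesis .
qed simp

lemma infdist_mult_norm_le:
  fixes V :: "'a::real_normed_vector set"
  assumes "subspace V" "v \<in> V"
  shows "infdist a V * norm v \<le> (infdist a V + norm a) * norm (v + t *\<^sub>R a)"
proof -
  have "infdist a V * norm v \<le> infdist a V * (norm (v + t *\<^sub>R a) + \<bar>t\<bar> * norm a)"
    using norm_triangle_ineq4[of "v + t *\<^sub>R a" "t *\<^sub>R a"] infdist_nonneg
    by (intro mult_left_mono) auto
  also have "\<dots> \<le> infdist a V * norm (v + t *\<^sub>R a) + norm (v + t *\<^sub>R a) * norm a"
    using abs_scaleR_infdist_le_norm[OF assms, of t a]
    by (simp add: distrib_left mult_right_mono mult.assoc[symmetric] mult.commute[of "infdist a V"])
  finally show ?thesis by (simp add: algebra_simps)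
qed

lemma Cauchy_coefficients_span_insert:
  fixes V :: "'a::real_normed_vector set"
  assumes V: "subspace V" and \<delta>: "infdist a V > 0" and w: "Cauchy w"
    and t: "\<And>n. w n - t n *\<^sub>R a \<in> V"
  shows "Cauchy t"
proof (rule metric_CauchyI)
  fix e :: real assume e: "e > 0"
  obtain M where M: "\<And>m n. m \<ge> M \<Longrightarrow> n \<ge> M \<Longrightarrow> norm (w m - w n) < e * infdist a V"
    using CauchyD[OF w, of "e * infdist a V"] e \<delta> by auto
  have "dist (t m) (t n) < e" if "m \<ge> M" "n \<ge> M" for m n
  proof -
    have "(w m - t m *\<^sub>R a) - (w n - t n *\<^sub>R a) \<in> V" using subspace_diff[OF V t t] .
    from abs_scaleR_infdist_le_norm[OF V this, of "t m - t n" a]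
    have "\<bar>t m - t n\<bar> * infdist a V \<le> norm (w m - w n)" by (simp add: algebra_simps)
    then have "\<bar>t m - t n\<bar> * infdist a V < e * infdist a V" using M[OF that] by linarith
    then show ?thesis unfolding dist_real_def by (rule mult_right_less_imp_less) (use \<delta> in simp)
  qed
  then show "\<exists>M. \<forall>m\<ge>M. \<forall>n\<ge>M. dist (t m) (t n) < e" by blast
qed

lemma closed_span_finite:
  fixes S :: "'a::real_normed_vector set"
  assumes "finite S"
  shows "closed (span S)"
  using assms
proof (induction S rule: finite_induct)
  case (insert a S)
  show ?case
  proof (cases "a \<in> span S")
    case True then show ?thesis using insert span_redundant by metis
  next
    case False
    have \<delta>: "infdist a (span S) > 0"
      by (rule infdist_pos_not_in_closed[OF insert(3) _ False]) (use span_zero in blast)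
    show ?thesis
      unfolding closed_sequential_limits
    proof (intro allI impI, elim conjE)
      fix w b assume w: "\<forall>n. w n \<in> span (insert a S)" and lim: "w \<longlonglongrightarrow> b"
      have "\<forall>n. \<exists>t. w n - t *\<^sub>R a \<in> span S" using w unfolding span_insert by blast
      then obtain t where t: "\<And>n. w n - t n *\<^sub>R a \<in> span S" by metis
      have "Cauchy t"
        using subspace_span \<delta> LIMSEQ_imp_Cauchy[OF lim] t by (rule Cauchy_coefficients_span_insert)
      then have "t \<longlonglongrightarrow> lim t" by (simp add: Cauchy_convergent_iff convergent_LIMSEQ_iff)
      then have "(\<lambda>n. w n - t n *\<^sub>R a) \<longlonglongrightarrow> b - lim t *\<^sub>R a" by (intro tendsto_intros lim)
      then have "b - lim t *\<^sub>R a \<in> span S"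
        using insert(3) t unfolding closed_sequential_limits by (metis (no_types, lifting))
      then show "b \<in> span (insert a S)" unfolding span_insert by blast
    qed
  qed
qed simp

text \<open>The constants are chosen so that the components of \<open>x\<close> in \<open>V\<close> and along \<open>a\<close> each
  contribute at most \<open>\<kappa> \<parallel>x\<parallel> / 2\<close>.\<close>
lemma abs_blinfun_span_insert_le:
  fixes h :: "'a::real_normed_vector \<Rightarrow>\<^sub>L real"
  assumes V: "subspace V" and \<delta>: "infdist a V > 0" and \<kappa>: "\<kappa> > 0"
    and hV: "\<And>v. v \<in> V \<Longrightarrow>
      \<bar>blinfun_apply h v\<bar> \<le> \<kappa> * infdist a V / (2 * (infdist a V + norm a)) * norm v"
    and ha: "\<bar>blinfun_apply h a\<bar> \<le> \<kappa> * infdist a V / 2"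
    and x: "x \<in> span (insert a V)"
  shows "\<bar>blinfun_apply h x\<bar> \<le> \<kappa> * norm x"
proof -
  define \<delta>' where "\<delta>' = infdist a V"
  have "span V = V" using V by (simp add: span_eq_iff)
  then obtain t where "x - t *\<^sub>R a \<in> V" using x unfolding span_insert by blast
  define s where "s = x - t *\<^sub>R a"
  have s: "s \<in> V" and xs: "x = s + t *\<^sub>R a" using \<open>x - t *\<^sub>R a \<in> V\<close> by (simp_all add: s_def)
  have "\<delta>' + norm a > 0" using \<delta> by (simp add: \<delta>'_def add_pos_nonneg)
  have "\<delta>' * norm s \<le> (\<delta>' + norm a) * norm x"
    using infdist_mult_norm_le[OF V s, of a t] xs by (simp add: \<delta>'_def)
  then have "\<kappa> / (2 * (\<delta>' + norm a)) * (\<delta>' * norm s)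
      \<le> \<kappa> / (2 * (\<delta>' + norm a)) * ((\<delta>' + norm a) * norm x)"
    using \<kappa> \<open>\<delta>' + norm a > 0\<close> by (intro mult_left_mono) simp_all
  also have "\<dots> = \<kappa> / 2 * norm x" using \<open>\<delta>' + norm a > 0\<close> by (simp add: field_simps)
  finally have "\<kappa> / (2 * (\<delta>' + norm a)) * (\<delta>' * norm s) \<le> \<kappa> / 2 * norm x" .
  moreover have "\<bar>blinfun_apply h s\<bar> \<le> \<kappa> / (2 * (\<delta>' + norm a)) * (\<delta>' * norm s)"
    using hV[OF s] unfolding \<delta>'_def by (simp add: ac_simps)
  ultimately have "\<bar>blinfun_apply h s\<bar> \<le> \<kappa> / 2 * norm x" by linarith
  moreover have "\<bar>t\<bar> * \<bar>blinfun_apply h a\<bar> \<le> \<kappa> / 2 * norm x"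
  proof -
    have "\<bar>t\<bar> * \<bar>blinfun_apply h a\<bar> \<le> \<kappa> / 2 * (\<bar>t\<bar> * \<delta>')"
      using mult_left_mono[OF ha abs_ge_zero[of t]] by (simp add: \<delta>'_def mult_ac)
    also have "\<bar>t\<bar> * \<delta>' \<le> norm x"
      using abs_scaleR_infdist_le_norm[OF V s, of t a] xs by (simp add: \<delta>'_def)
    finally show ?thesis using \<kappa> by (simp add: mult_left_mono)
  qed
  moreover have "\<bar>blinfun_apply h x\<bar> \<le> \<bar>blinfun_apply h s\<bar> + \<bar>t\<bar> * \<bar>blinfun_apply h a\<bar>"
    using xs abs_triangle_ineq[of "blinfun_apply h s" "t * blinfun_apply h a"]
    by (simp add: blinfun.add_right blinfun.scaleR_right abs_mult)
  ultimately show ?thesis by simp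
qed

lemma small_on_finite_span:
  fixes S :: "'a::real_normed_vector set"
  assumes "finite S" "\<kappa> > 0"
  shows "\<exists>F \<eta>. finite F \<and> \<eta> > 0 \<and>
     (\<forall>h::'a \<Rightarrow>\<^sub>L real. (\<forall>b\<in>F. \<bar>blinfun_apply h b\<bar> < \<eta>) \<longrightarrow>
        (\<forall>x\<in>span S. \<bar>blinfun_apply h x\<bar> \<le> \<kappa> * norm x))"
  using assms
proof (induction S arbitrary: \<kappa> rule: finite_induct)
  case empty then show ?case by (intro exI[of _ "{}"] exI[of _ 1]) auto
next
  case (insert a S \<kappa>)
  show ?case
  proof (cases "a \<in> span S")
    case True then show ?thesis using insert span_redundant by metis
  next
    case False
    define \<delta> where "\<delta> = infdist a (span S)"
    have \<delta>: "\<delta> > 0" unfolding \<delta>_def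
      by (rule infdist_pos_not_in_closed[OF closed_span_finite[OF insert(1)] _ False])
        (use span_zero in blast)
    have "\<kappa> * \<delta> / (2 * (\<delta> + norm a)) > 0" using insert(4) \<delta> by (simp add: add_pos_nonneg)
    then obtain F \<eta> where F: "finite F" "\<eta> > 0" and small: "\<And>h::'a \<Rightarrow>\<^sub>L real.
        \<forall>b\<in>F. \<bar>blinfun_apply h b\<bar> < \<eta> \<Longrightarrow>
        \<forall>x\<in>span S. \<bar>blinfun_apply h x\<bar> \<le> \<kappa> * \<delta> / (2 * (\<delta> + norm a)) * norm x"
      using insert(3) by blast
    have "\<bar>blinfun_apply h x\<bar> \<le> \<kappa> * norm x"
      if h: "\<forall>b\<in>insert a F. \<bar>blinfun_apply h b\<bar> < min \<eta> (\<kappa> * \<delta> / 2)"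
        and x: "x \<in> span (insert a S)" for h :: "'a \<Rightarrow>\<^sub>L real" and x
    proof (rule abs_blinfun_span_insert_le[OF subspace_span _ insert(4)])
      show "infdist a (span S) > 0" using \<delta> unfolding \<delta>_def .
      have "\<forall>b\<in>F. \<bar>blinfun_apply h b\<bar> < \<eta>" using h by simp
      then have "\<forall>v\<in>span S. \<bar>blinfun_apply h v\<bar> \<le> \<kappa> * \<delta> / (2 * (\<delta> + norm a)) * norm v"
        by (rule small)
      then show "\<bar>blinfun_apply h v\<bar>
          \<le> \<kappa> * infdist a (span S) / (2 * (infdist a (span S) + norm a)) * norm v"
        if "v \<in> span S" for v
        using that unfolding \<delta>_def by blast
      have "\<bar>blinfun_apply h a\<bar> < \<kappa> * \<delta> / 2" using h by simp
      then show "\<bar>blinfun_apply h a\<bar> \<le> \<kappa> * infdist a (span S) / 2"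
        unfolding \<delta>_def by (rule less_imp_le)
      have "insert a S \<subseteq> insert a (span S)" using span_superset by blast
      then show "x \<in> span (insert a (span S))" using span_mono x by blast
    qed
    moreover have "min \<eta> (\<kappa> * \<delta> / 2) > 0" using F \<delta> insert(4) by simp
    ultimately show ?thesis
      using F by (intro exI[of _ "insert a F"] exI[of _ "min \<eta> (\<kappa> * \<delta> / 2)"]) auto
  qed
qed

lemma weak_star_open_basic:
  fixes f0 :: "'a::real_normed_vector \<Rightarrow>\<^sub>L real"
  assumes F: "finite F"
  shows "weak_star_open {g. \<forall>b\<in>F. \<bar>blinfun_apply g b - blinfun_apply f0 b\<bar> < \<eta>}"
  unfolding weak_star_open_def
proof (intro ballI)
  fix f assume f: "f \<in> {g. \<forall>b\<in>F. \<bar>blinfun_apply g b - blinfun_apply f0 b\<bar> < \<eta>}"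
  \<comment> \<open>the radius is the smallest slack of \<open>f\<close> in the finitely many constraints\<close>
  define r where "r = Min (insert \<eta> ((\<lambda>b. \<eta> - \<bar>blinfun_apply f b - blinfun_apply f0 b\<bar>) ` F))"
  show "\<exists>F' e. finite F' \<and> e > 0 \<and> {g. \<forall>x\<in>F'. \<bar>blinfun_apply g x - blinfun_apply f x\<bar> < e}
           \<subseteq> {g. \<forall>b\<in>F. \<bar>blinfun_apply g b - blinfun_apply f0 b\<bar> < \<eta>}"
  proof (cases "F = {}")
    case True then show ?thesis by (intro exI[of _ "{}"] exI[of _ 1]) auto
  next
    case False
    then have "\<eta> > 0" using f by fastforce
    then have "r > 0" using F f unfolding r_def by (simp add: Min_gr_iff)
    moreover have "r \<le> \<eta> - \<bar>blinfun_apply f b - blinfun_apply f0 b\<bar>" if "b \<in> F" for b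
      using F that unfolding r_def by (intro Min_le) auto
    ultimately show ?thesis using F by (intro exI[of _ F] exI[of _ r]) force
  qed
qed

section \<open>The four conditions\<close>

definition free_value_extensions :: "'a::real_normed_vector itself \<Rightarrow> bool" where
  "free_value_extensions _ \<longleftrightarrow> (\<forall>(E::'a set) (xs::'a \<Rightarrow>\<^sub>L real) (e::real) (e0::real).
     finite_dim_subspace E \<longrightarrow> norm xs \<le> 1 \<longrightarrow> e > 0 \<longrightarrow> 0 < e0 \<longrightarrow> e0 < e \<longrightarrow>
     (\<exists>y::'a. norm y = 1 \<and>
        (\<forall>\<gamma>::real. \<bar>\<gamma>\<bar> \<le> 1 + e0 \<longrightarrow>
           (\<exists>ys::'a \<Rightarrow>\<^sub>L real. (\<forall>x\<in>E. blinfun_apply ys x = blinfun_apply xs x)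
              \<and> blinfun_apply ys y = \<gamma> \<and> norm ys \<le> 1 + e))))"

definition separated_extensions :: "'a::real_normed_vector itself \<Rightarrow> bool" where
  "separated_extensions _ \<longleftrightarrow> (\<forall>(E::'a set) (xs::'a \<Rightarrow>\<^sub>L real) (e::real).
     finite_dim_subspace E \<longrightarrow> norm xs \<le> 1 \<longrightarrow> e > 0 \<longrightarrow>
     (\<exists>(y::'a) (x1::'a \<Rightarrow>\<^sub>L real) (x2::'a \<Rightarrow>\<^sub>L real). norm y = 1
        \<and> (\<forall>x\<in>E. blinfun_apply x1 x = blinfun_apply xs x)
        \<and> (\<forall>x\<in>E. blinfun_apply x2 x = blinfun_apply xs x)
        \<and> blinfun_apply x1 y - blinfun_apply x2 y > 2 - e
        \<and> norm x1 \<le> 1 + e \<and> norm x2 \<le> 1 + e))"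

lemma weakly_octahedral_imp_free_value_extensions:
  assumes "weakly_octahedral X"
  shows "free_value_extensions X"
  unfolding free_value_extensions_def
proof (intro allI impI)
  fix E :: "'a set" and xs :: "'a \<Rightarrow>\<^sub>L real" and e e0 :: real
  assume E: "finite_dim_subspace E" and xs: "norm xs \<le> 1" and e: "e > 0" "0 < e0" "e0 < e"
  define \<delta> where "\<delta> = (e - e0) / (1 + e)"
  have "\<delta> > 0" using e unfolding \<delta>_def by simp
  then obtain y where y: "norm y = 1"
    and octahedral: "\<And>x. x \<in> E \<Longrightarrow> (1 - \<delta>) * (\<bar>blinfun_apply xs x\<bar> + norm y) \<le> norm (x + y)"
    using assms[unfolded weakly_octahedral_def, rule_format, OF E xs] by blast
  have \<delta>: "(1 + e) * (1 - \<delta>) = 1 + e0" using e unfolding \<delta>_def by (simp add: field_simps)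
  have "\<exists>ys::'a \<Rightarrow>\<^sub>L real. (\<forall>x\<in>E. blinfun_apply ys x = blinfun_apply xs x)
          \<and> blinfun_apply ys y = \<gamma> \<and> norm ys \<le> 1 + e" if \<gamma>: "\<bar>\<gamma>\<bar> \<le> 1 + e0" for \<gamma>
  proof (rule blinfun_extension_with_value)
    show "subspace E" using E unfolding finite_dim_subspace_def by simp
    show "0 \<le> 1 + e" using e by simp
    show "\<bar>blinfun_apply xs v\<bar> \<le> (1 + e) * norm v" for v
      using abs_blinfun_le[of xs "1 + e" v] xs e by simp
    fix v assume v: "v \<in> E"
    have "\<bar>blinfun_apply xs v + \<gamma>\<bar> \<le> \<bar>blinfun_apply xs v\<bar> + \<bar>\<gamma>\<bar>" by (rule abs_triangle_ineq)
    moreover have "0 \<le> e0 * \<bar>blinfun_apply xs v\<bar>" using e by simp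
    moreover have "(1 + e0) * (\<bar>blinfun_apply xs v\<bar> + 1)
        = \<bar>blinfun_apply xs v\<bar> + 1 + e0 + e0 * \<bar>blinfun_apply xs v\<bar>"
      by (simp add: algebra_simps)
    ultimately have "\<bar>blinfun_apply xs v + \<gamma>\<bar> \<le> (1 + e0) * (\<bar>blinfun_apply xs v\<bar> + 1)"
      using \<gamma> by linarith
    also have "\<dots> = (1 + e) * ((1 - \<delta>) * (\<bar>blinfun_apply xs v\<bar> + norm y))"
      using \<delta> y by simp
    also have "\<dots> \<le> (1 + e) * norm (v + y)"
      using octahedral[OF v] e by (intro mult_left_mono) auto
    finally show "\<bar>blinfun_apply xs v + \<gamma>\<bar> \<le> (1 + e) * norm (v + y)" .
  qed
  with y show "\<exists>y::'a. norm y = 1 \<and> (\<forall>\<gamma>. \<bar>\<gamma>\<bar> \<le> 1 + e0 \<longrightarrow>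
      (\<exists>ys::'a \<Rightarrow>\<^sub>L real. (\<forall>x\<in>E. blinfun_apply ys x = blinfun_apply xs x)
        \<and> blinfun_apply ys y = \<gamma> \<and> norm ys \<le> 1 + e))"
    by (intro exI[of _ y]) simp
qed

lemma free_value_extensions_imp_separated_extensions:
  assumes "free_value_extensions X"
  shows "separated_extensions X"
  unfolding separated_extensions_def
proof (intro allI impI)
  fix E :: "'a set" and xs :: "'a \<Rightarrow>\<^sub>L real" and e :: real
  assume E: "finite_dim_subspace E" "norm xs \<le> 1" and e: "e > 0"
  obtain y where y: "norm y = 1"
    and ext: "\<And>\<gamma>. \<bar>\<gamma>\<bar> \<le> 1 + e / 2 \<Longrightarrow> \<exists>ys::'a \<Rightarrow>\<^sub>L real.
      (\<forall>x\<in>E. blinfun_apply ys x = blinfun_apply xs x) \<and> blinfun_apply ys y = \<gamma> \<and> norm ys \<le> 1 + e"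
    using assms[unfolded free_value_extensions_def, rule_format, of E xs e "e / 2"] E e by auto
  obtain x1 x2 :: "'a \<Rightarrow>\<^sub>L real" where
    "\<forall>x\<in>E. blinfun_apply x1 x = blinfun_apply xs x" "blinfun_apply x1 y = 1" "norm x1 \<le> 1 + e"
    "\<forall>x\<in>E. blinfun_apply x2 x = blinfun_apply xs x" "blinfun_apply x2 y = - 1" "norm x2 \<le> 1 + e"
    using ext[of 1] ext[of "- 1"] e by auto
  with y e show "\<exists>y x1 x2. norm y = 1
      \<and> (\<forall>x\<in>E. blinfun_apply x1 x = blinfun_apply xs x)
      \<and> (\<forall>x\<in>E. blinfun_apply x2 x = blinfun_apply xs x)
      \<and> blinfun_apply x1 y - blinfun_apply x2 y > 2 - e \<and> norm x1 \<le> 1 + e \<and> norm x2 \<le> 1 + e"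
    by (intro exI[of _ y] exI[of _ x1] exI[of _ x2]) auto
qed

lemma separated_extensions_imp_weakly_octahedral:
  assumes "separated_extensions X"
  shows "weakly_octahedral X"
  unfolding weakly_octahedral_def
proof (intro allI impI)
  fix E :: "'a set" and xs :: "'a \<Rightarrow>\<^sub>L real" and e :: real
  assume E: "finite_dim_subspace E" "norm xs \<le> 1" and e: "e > 0"
  define \<delta> where "\<delta> = e / 3"
  have \<delta>: "\<delta> > 0" using e unfolding \<delta>_def by simp
  obtain y x1 x2 where y: "norm y = 1"
    and x1: "\<forall>x\<in>E. blinfun_apply x1 x = blinfun_apply xs x" "norm x1 \<le> 1 + \<delta>"
    and x2: "\<forall>x\<in>E. blinfun_apply x2 x = blinfun_apply xs x" "norm x2 \<le> 1 + \<delta>"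
    and far: "blinfun_apply x1 y - blinfun_apply x2 y > 2 - \<delta>"
    using assms[unfolded separated_extensions_def, rule_format, OF E \<delta>] by blast
  have bound1: "\<bar>blinfun_apply x1 v\<bar> \<le> (1 + \<delta>) * norm v" for v using abs_blinfun_le[OF x1(2)] .
  have bound2: "\<bar>blinfun_apply x2 v\<bar> \<le> (1 + \<delta>) * norm v" for v using abs_blinfun_le[OF x2(2)] .
  \<comment> \<open>\<open>x1\<close>, \<open>x2\<close> are nearly \<open>1\<close>, \<open>-1\<close> at \<open>y\<close>; test \<open>x + y\<close> with the one matching the sign of \<open>xs x\<close>\<close>
  have y1: "blinfun_apply x1 y > 1 - 2 * \<delta>" using far bound2[of y] y by (simp add: abs_le_iff)
  have y2: "blinfun_apply x2 y < - 1 + 2 * \<delta>" using far bound1[of y] y by (simp add: abs_le_iff)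
  have "(1 - e) * (\<bar>blinfun_apply xs x\<bar> + norm y) \<le> norm (x + y)" if x: "x \<in> E" for x
  proof -
    define A where "A = \<bar>blinfun_apply xs x\<bar> + 1"
    have "A - 2 * \<delta> \<le> (1 + \<delta>) * norm (x + y)"
    proof (cases "blinfun_apply xs x \<ge> 0")
      case True
      then have "A - 2 * \<delta> \<le> blinfun_apply x1 (x + y)"
        using y1 x1 x unfolding A_def by (simp add: blinfun.add_right)
      then show ?thesis using bound1[of "x + y"] by simp
    next
      case False
      then have "A - 2 * \<delta> \<le> - blinfun_apply x2 (x + y)"
        using y2 x2 x unfolding A_def by (simp add: blinfun.add_right)
      then show ?thesis using bound2[of "x + y"] by simp
    qed
    moreover have "(1 + \<delta>) * ((1 - e) * A) \<le> A - 2 * \<delta>"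
    proof -
      have "e = 3 * \<delta>" unfolding \<delta>_def by simp
      then have "(1 + \<delta>) * ((1 - e) * A) = A - 2 * \<delta> * A - 3 * \<delta>\<^sup>2 * A"
        by (simp add: algebra_simps power2_eq_square)
      moreover have "2 * \<delta> \<le> 2 * \<delta> * A" "0 \<le> 3 * \<delta>\<^sup>2 * A" using \<delta> unfolding A_def by simp_all
      ultimately show ?thesis by linarith
    qed
    ultimately have "(1 + \<delta>) * ((1 - e) * A) \<le> (1 + \<delta>) * norm (x + y)" by linarith
    then show ?thesis using \<delta> y unfolding A_def by simp
  qed
  with y show "\<exists>y. norm y = 1 \<and> (\<forall>x\<in>E. norm (x + y) \<ge> (1 - e) * (\<bar>blinfun_apply xs x\<bar> + norm y))"
    by blast
qed

lemma diameter_inter_unit_ball_le: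
  fixes U :: "('a::real_normed_vector \<Rightarrow>\<^sub>L real) set"
  shows "diameter (U \<inter> {f. norm f \<le> 1}) \<le> 2"
  by (rule diameter_le) (auto intro: order_trans[OF norm_triangle_ineq4])

lemma bounded_inter_unit_ball:
  fixes U :: "('a::real_normed_vector \<Rightarrow>\<^sub>L real) set"
  shows "bounded (U \<inter> {f. norm f \<le> 1})"
  by (rule bounded_subset[of "cball 0 1"]) auto

lemma scaled_extension_in_neighbourhood:
  fixes x f0 :: "'a::real_normed_vector \<Rightarrow>\<^sub>L real"
  assumes F: "finite F" and f0: "norm f0 \<le> 1" and \<delta>: "\<delta> > 0" "\<delta> * (sum norm F + 1) \<le> e"
    and x: "\<forall>b\<in>F. blinfun_apply x b = blinfun_apply f0 b" "norm x \<le> 1 + \<delta>"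
  shows "(1 / (1 + \<delta>)) *\<^sub>R x
    \<in> {g. \<forall>b\<in>F. \<bar>blinfun_apply g b - blinfun_apply f0 b\<bar> < e} \<inter> {f. norm f \<le> 1}"
proof -
  have "\<bar>blinfun_apply ((1 / (1 + \<delta>)) *\<^sub>R x) b - blinfun_apply f0 b\<bar> < e" if b: "b \<in> F" for b
  proof -
    have "blinfun_apply ((1 / (1 + \<delta>)) *\<^sub>R x) b - blinfun_apply f0 b
        = - (\<delta> / (1 + \<delta>)) * blinfun_apply f0 b"
      using x(1) b \<delta>(1) by (simp add: blinfun.scaleR_left field_simps)
    then have "\<bar>blinfun_apply ((1 / (1 + \<delta>)) *\<^sub>R x) b - blinfun_apply f0 b\<bar>
        = \<delta> / (1 + \<delta>) * \<bar>blinfun_apply f0 b\<bar>"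
      using \<delta>(1) by (simp add: abs_mult)
    also have "\<dots> \<le> \<delta> * \<bar>blinfun_apply f0 b\<bar>"
      using \<delta>(1) by (intro mult_right_mono) (auto simp: field_simps)
    also have "\<dots> \<le> \<delta> * sum norm F"
      using abs_blinfun_le[OF f0, of b] member_le_sum[of b F norm] F b \<delta>(1)
      by (intro mult_left_mono) auto
    also have "\<dots> < e" using \<delta> by (simp add: algebra_simps)
    finally show ?thesis .
  qed
  moreover have "norm ((1 / (1 + \<delta>)) *\<^sub>R x) \<le> 1" using x(2) \<delta>(1) by simp
  ultimately show ?thesis by simp
qed

lemma separated_extensions_diameter_ge:
  fixes X :: "'a::real_normed_vector itself" and f0 :: "'a \<Rightarrow>\<^sub>L real"
  assumes "separated_extensions X" and F: "finite F" and f0: "norm f0 \<le> 1"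
    and FU: "{g. \<forall>b\<in>F. \<bar>blinfun_apply g b - blinfun_apply f0 b\<bar> < e} \<subseteq> U"
    and \<delta>: "\<delta> > 0" "\<delta> * (sum norm F + 1) \<le> e"
  shows "2 - 4 * \<delta> \<le> diameter (U \<inter> {f. norm f \<le> 1})"
proof -
  have "finite_dim_subspace (span F)" unfolding finite_dim_subspace_def using F by auto
  from assms(1)[unfolded separated_extensions_def, rule_format, OF this f0 \<delta>(1)]
  obtain y x1 x2 where y: "norm y = 1"
    and x1: "\<forall>x\<in>span F. blinfun_apply x1 x = blinfun_apply f0 x" "norm x1 \<le> 1 + \<delta>"
    and x2: "\<forall>x\<in>span F. blinfun_apply x2 x = blinfun_apply f0 x" "norm x2 \<le> 1 + \<delta>"
    and far: "blinfun_apply x1 y - blinfun_apply x2 y > 2 - \<delta>"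
    by blast
  define g1 where "g1 = (1 / (1 + \<delta>)) *\<^sub>R x1"
  define g2 where "g2 = (1 / (1 + \<delta>)) *\<^sub>R x2"
  have "F \<subseteq> span F" by (rule span_superset)
  then have "\<forall>b\<in>F. blinfun_apply x1 b = blinfun_apply f0 b"
    "\<forall>b\<in>F. blinfun_apply x2 b = blinfun_apply f0 b"
    using x1(1) x2(1) by blast+
  then have "g1 \<in> U \<inter> {f. norm f \<le> 1}" "g2 \<in> U \<inter> {f. norm f \<le> 1}"
    using scaled_extension_in_neighbourhood[OF F f0 \<delta>] x1(2) x2(2) FU
    unfolding g1_def g2_def by blast+
  have "2 - 4 * \<delta> \<le> (2 - \<delta>) / (1 + \<delta>)" using \<delta>(1) by (simp add: field_simps)
  also have "\<dots> < (blinfun_apply x1 y - blinfun_apply x2 y) / (1 + \<delta>)"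
    using far \<delta>(1) by (simp add: divide_strict_right_mono)
  also have "\<dots> = blinfun_apply (g1 - g2) y"
    unfolding g1_def g2_def by (simp add: blinfun.diff_left blinfun.scaleR_left diff_divide_distrib)
  also have "\<dots> \<le> dist g1 g2"
    using abs_blinfun_le[of "g1 - g2" "norm (g1 - g2)" y] y by (simp add: dist_norm)
  also have "\<dots> \<le> diameter (U \<inter> {f. norm f \<le> 1})"
    using \<open>g1 \<in> U \<inter> {f. norm f \<le> 1}\<close> \<open>g2 \<in> U \<inter> {f. norm f \<le> 1}\<close>
    by (intro diameter_bounded_bound bounded_inter_unit_ball)
  finally show ?thesis by simp
qed

lemma separated_extensions_imp_weak_star_diameter_two:
  assumes "separated_extensions X"
  shows "weak_star_diameter_two X"
  unfolding weak_star_diameter_two_def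
proof (intro allI impI)
  fix U :: "('a \<Rightarrow>\<^sub>L real) set"
  assume "weak_star_open U" and "U \<inter> {f. norm f \<le> 1} \<noteq> {}"
  then obtain f0 where f0: "f0 \<in> U" "norm f0 \<le> 1" by auto
  obtain F e where F: "finite F" "e > 0"
    and FU: "{g. \<forall>x\<in>F. \<bar>blinfun_apply g x - blinfun_apply f0 x\<bar> < e} \<subseteq> U"
    using \<open>weak_star_open U\<close> f0(1) unfolding weak_star_open_def by blast
  have "2 \<le> diameter (U \<inter> {f. norm f \<le> 1}) + \<epsilon>" if "\<epsilon> > 0" for \<epsilon>
  proof -
    define \<delta> where "\<delta> = min (\<epsilon> / 4) (e / (sum norm F + 1))"
    have "sum norm F + 1 > 0" by (simp add: add_nonneg_pos sum_nonneg)
    then have "\<delta> > 0" "\<delta> * (sum norm F + 1) \<le> e"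
      using F(2) \<open>\<epsilon> > 0\<close> unfolding \<delta>_def by (auto simp: min_def pos_le_divide_eq)
    from separated_extensions_diameter_ge[OF assms F(1) f0(2) FU this]
    show ?thesis unfolding \<delta>_def by linarith
  qed
  then have "2 \<le> diameter (U \<inter> {f. norm f \<le> 1})" by (rule field_le_epsilon)
  with diameter_inter_unit_ball_le[of U] show "diameter (U \<inter> {f. norm f \<le> 1}) = 2" by linarith
qed

lemma weak_star_diameter_two_far_pair:
  fixes X :: "'a::real_normed_vector itself" and xs :: "'a \<Rightarrow>\<^sub>L real"
  assumes "weak_star_diameter_two X" "finite F" "\<eta> > 0" "norm xs \<le> 1" "0 < \<theta>" "\<theta> < 2"
  defines "S \<equiv> {g. \<forall>b\<in>F. \<bar>blinfun_apply g b - blinfun_apply xs b\<bar> < \<eta>} \<inter> {f. norm f \<le> 1}"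
  obtains g1 g2 y where "g1 \<in> S" "g2 \<in> S" "norm y = 1" "blinfun_apply (g1 - g2) y > 2 - \<theta>"
proof -
  have "xs \<in> S" unfolding S_def using assms(3,4) by simp
  then have "diameter S = 2"
    using assms(1) weak_star_open_basic[OF assms(2)]
    unfolding weak_star_diameter_two_def S_def by blast
  then obtain g1 g2 where g: "g1 \<in> S" "g2 \<in> S" "2 - \<theta> < dist g1 g2"
    using diameter_lower_bounded[of S "2 - \<theta>"] bounded_inter_unit_ball assms(5,6)
    unfolding S_def by auto
  moreover obtain y where "norm y = 1" "blinfun_apply (g1 - g2) y > 2 - \<theta>"
    using exists_unit_blinfun_gt[of "2 - \<theta>" "g1 - g2"] g(3) assms(6)
    by (metis dist_norm less_eq_real_def diff_ge_0_iff_ge)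
  ultimately show ?thesis using that by blast
qed

lemma weak_star_diameter_two_imp_separated_extensions:
  assumes "weak_star_diameter_two X"
  shows "separated_extensions X"
  unfolding separated_extensions_def
proof (intro allI impI)
  fix E :: "'a set" and xs :: "'a \<Rightarrow>\<^sub>L real" and e :: real
  assume E: "finite_dim_subspace E" and xs: "norm xs \<le> 1" and e: "e > 0"
  have "subspace E" using E unfolding finite_dim_subspace_def by simp
  obtain F0 where F0: "finite F0" "span F0 = E" using E unfolding finite_dim_subspace_def by blast
  obtain F \<eta> where F: "finite F" "\<eta> > 0" and small: "\<And>h::'a \<Rightarrow>\<^sub>L real.
      \<forall>b\<in>F. \<bar>blinfun_apply h b\<bar> < \<eta> \<Longrightarrow> \<forall>x\<in>E. \<bar>blinfun_apply h x\<bar> \<le> e / 4 * norm x"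
    using small_on_finite_span[OF F0(1), of "e / 4"] e F0(2) by auto
  define S where "S = {g. \<forall>b\<in>F. \<bar>blinfun_apply g b - blinfun_apply xs b\<bar> < \<eta>} \<inter> {f. norm f \<le> 1}"
  have "0 < min (e / 2) 1" "min (e / 2) 1 < 2" using e by auto
  then obtain g1 g2 y where g: "g1 \<in> S" "g2 \<in> S" and y: "norm y = 1"
    and gy: "blinfun_apply (g1 - g2) y > 2 - min (e / 2) 1"
    using weak_star_diameter_two_far_pair[OF assms F xs] unfolding S_def by blast
  \<comment> \<open>correct each \<open>g\<^sub>i\<close> by a norm-\<open>e/4\<close> extension of \<open>xs - g\<^sub>i\<close> restricted to \<open>E\<close>\<close>
  have correction: "\<exists>k::'a \<Rightarrow>\<^sub>L real.
      (\<forall>x\<in>E. blinfun_apply k x = blinfun_apply (xs - g) x) \<and> norm k \<le> e / 4"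
    if "g \<in> S" for g
  proof (rule blinfun_extension[OF \<open>subspace E\<close>])
    have "\<forall>b\<in>F. \<bar>blinfun_apply (xs - g) b\<bar> < \<eta>"
      using that unfolding S_def by (simp add: blinfun.diff_left abs_minus_commute)
    then show "\<And>v. v \<in> E \<Longrightarrow> \<bar>blinfun_apply (xs - g) v\<bar> \<le> e / 4 * norm v" using small by blast
  qed (use e in simp)
  obtain k1 where k1: "\<forall>x\<in>E. blinfun_apply k1 x = blinfun_apply (xs - g1) x" "norm k1 \<le> e / 4"
    using correction[OF g(1)] by blast
  obtain k2 where k2: "\<forall>x\<in>E. blinfun_apply k2 x = blinfun_apply (xs - g2) x" "norm k2 \<le> e / 4"
    using correction[OF g(2)] by blast
  have "\<forall>x\<in>E. blinfun_apply (g1 + k1) x = blinfun_apply xs x"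
    "\<forall>x\<in>E. blinfun_apply (g2 + k2) x = blinfun_apply xs x"
    using k1(1) k2(1) by (simp_all add: blinfun.add_left blinfun.diff_left)
  moreover have "blinfun_apply (g1 + k1) y - blinfun_apply (g2 + k2) y > 2 - e"
  proof -
    have "\<bar>blinfun_apply k1 y\<bar> \<le> e / 4" "\<bar>blinfun_apply k2 y\<bar> \<le> e / 4"
      using abs_blinfun_le[OF k1(2), of y] abs_blinfun_le[OF k2(2), of y] y by simp_all
    then show ?thesis using gy by (simp add: blinfun.add_left blinfun.diff_left abs_le_iff)
  qed
  moreover have "norm (g1 + k1) \<le> 1 + e" "norm (g2 + k2) \<le> 1 + e"
    using g(1,2) k1(2) k2(2) e norm_triangle_ineq[of g1 k1] norm_triangle_ineq[of g2 k2]
    unfolding S_def by auto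
  ultimately show "\<exists>y x1 x2. norm y = 1
      \<and> (\<forall>x\<in>E. blinfun_apply x1 x = blinfun_apply xs x)
      \<and> (\<forall>x\<in>E. blinfun_apply x2 x = blinfun_apply xs x)
      \<and> blinfun_apply x1 y - blinfun_apply x2 y > 2 - e \<and> norm x1 \<le> 1 + e \<and> norm x2 \<le> 1 + e"
    using y by blast
qed

theorem theorem3p3:
  fixes X :: "'a::banach itself"
  assumes nontrivial: "\<exists>x::'a. x \<noteq> 0"
  shows "(weak_star_diameter_two X \<longleftrightarrow> weakly_octahedral X)
    \<and> (weakly_octahedral X \<longleftrightarrow>
        (\<forall>(E::'a set) (xs::'a \<Rightarrow>\<^sub>L real) (e::real) (e0::real).
           finite_dim_subspace E \<longrightarrow> norm xs \<le> 1 \<longrightarrow> e > 0 \<longrightarrow> 0 < e0 \<longrightarrow> e0 < e \<longrightarrow>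
           (\<exists>y::'a. norm y = 1 \<and>
              (\<forall>\<gamma>::real. \<bar>\<gamma>\<bar> \<le> 1 + e0 \<longrightarrow>
                 (\<exists>ys::'a \<Rightarrow>\<^sub>L real. (\<forall>x\<in>E. blinfun_apply ys x = blinfun_apply xs x)
                    \<and> blinfun_apply ys y = \<gamma> \<and> norm ys \<le> 1 + e)))))
    \<and> (weakly_octahedral X \<longleftrightarrow>
        (\<forall>(E::'a set) (xs::'a \<Rightarrow>\<^sub>L real) (e::real).
           finite_dim_subspace E \<longrightarrow> norm xs \<le> 1 \<longrightarrow> e > 0 \<longrightarrow>
           (\<exists>(y::'a) (x1::'a \<Rightarrow>\<^sub>L real) (x2::'a \<Rightarrow>\<^sub>L real). norm y = 1
              \<and> (\<forall>x\<in>E. blinfun_apply x1 x = blinfun_apply xs x)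
              \<and> (\<forall>x\<in>E. blinfun_apply x2 x = blinfun_apply xs x)
              \<and> blinfun_apply x1 y - blinfun_apply x2 y > 2 - e
              \<and> norm x1 \<le> 1 + e \<and> norm x2 \<le> 1 + e)))"
proof -
  have "weakly_octahedral X \<longleftrightarrow> free_value_extensions X"
    and "weakly_octahedral X \<longleftrightarrow> separated_extensions X"
    and "weak_star_diameter_two X \<longleftrightarrow> separated_extensions X"
    using weakly_octahedral_imp_free_value_extensions free_value_extensions_imp_separated_extensions
      separated_extensions_imp_weakly_octahedral separated_extensions_imp_weak_star_diameter_two
      weak_star_diameter_two_imp_separated_extensions
    by blast+
  then show ?thesis unfolding free_value_extensions_def separated_extensions_def by blast
qed

end
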